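(* For every $d\ge1$, $\theta^{\rm U}(1,d)=0$.
   Context: For integers $d\ge1$ and $1\le k\le 2d$, let each vertex $x\in\mathbb{Z}^d$, independently of all others, choose a uniformly random subset of exactly $k$ of its $2d$ nearest neighbors (in $\ell_1$-distance). The undirected $k$-neighbor graph ($k$-UnG) on $\mathbb{Z}^d$ has an undirected edge between nearest neighbors $x,y$ whenever $x$ chose $y$ or $y$ chose $x$ (or both). We write $\theta^{\rm U}(k,d)=\mathbb{P}(o\rightsquigarrow\infty\text{ in the $k$-UnG on }\mathbb{Z}^d)$, where $o$ is the origin and $o\rightsquigarrow\infty$ is the event that there is an infinite self-avoiding path of edges of the $k$-UnG starting at $o$ (equivalently, the connected component of $o$ is infinite). *)

theory Defs
  imports "HOL-Probability.Probability"
begin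

text \<open>Points of Z^d are encoded as functions nat => int vanishing at all coordinates >= d.\<close>

definition zd :: "nat \<Rightarrow> (nat \<Rightarrow> int) set" where
  "zd d = {x. \<forall>i\<ge>d. x i = 0}"

definition origin :: "nat \<Rightarrow> int" where
  "origin = (\<lambda>_. 0)"

definition nbrs :: "nat \<Rightarrow> (nat \<Rightarrow> int) \<Rightarrow> (nat \<Rightarrow> int) set" where
  "nbrs d x = {y. \<exists>i<d. \<exists>s\<in>{1, -1}. y = (\<lambda>j. if j = i then x j + s else x j)}"

definition choice_pmf :: "nat \<Rightarrow> nat \<Rightarrow> (nat \<Rightarrow> int) \<Rightarrow> (nat \<Rightarrow> int) set pmf" where
  "choice_pmf d k x = pmf_of_set {S. S \<subseteq> nbrs d x \<and> card S = k}"

definition kUnG :: "nat \<Rightarrow> nat \<Rightarrow> ((nat \<Rightarrow> int) \<Rightarrow> (nat \<Rightarrow> int) set) measure" where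
  "kUnG d k = PiM (zd d) (\<lambda>x. measure_pmf (choice_pmf d k x))"

definition ung_edge :: "nat \<Rightarrow> ((nat \<Rightarrow> int) \<Rightarrow> (nat \<Rightarrow> int) set) \<Rightarrow> (nat \<Rightarrow> int) \<Rightarrow> (nat \<Rightarrow> int) \<Rightarrow> bool" where
  "ung_edge d \<omega> x y \<longleftrightarrow> y \<in> nbrs d x \<and> (y \<in> \<omega> x \<or> x \<in> \<omega> y)"

definition perc_event :: "nat \<Rightarrow> nat \<Rightarrow> ((nat \<Rightarrow> int) \<Rightarrow> (nat \<Rightarrow> int) set) set" where
  "perc_event d k = {\<omega> \<in> space (kUnG d k).
     \<exists>p :: nat \<Rightarrow> (nat \<Rightarrow> int). p 0 = origin \<and> inj p \<and>
        (\<forall>n. p n \<in> zd d \<and> ung_edge d \<omega> (p n) (p (Suc n)))}"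

definition theta_U :: "nat \<Rightarrow> nat \<Rightarrow> real" where
  "theta_U k d = measure (kUnG d k) (perc_event d k)"

end

theory Submission
  imports Defs
begin

text \<open>In the 1-neighbour graph every vertex chooses exactly one neighbour, so the choices
  form a function \<open>c\<close>. Along a self-avoiding path \<open>w\<^sub>0, ..., w\<^sub>n\<close> each edge is
  traversed either along its choice (\<open>c w\<^sub>i = w\<^sub>i\<^sub>+\<^sub>1\<close>) or against it
  (\<open>c w\<^sub>i\<^sub>+\<^sub>1 = w\<^sub>i\<close>), and once an edge is traversed against its choice, so are all
  later ones, because the path does not return. Hence there is a peak \<open>j\<close> such that every
  vertex of the path other than \<open>w\<^sub>j\<close> has chosen its neighbour on the path towards \<open>w\<^sub>j\<close>:
  \<open>n\<close> independent choices, each of probability \<open>1/(2d)\<close>. A union bound over the at most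
  \<open>2d(2d-1)\<^sup>n\<^sup>-\<^sup>1\<close> self-avoiding walks of length \<open>n\<close> and the \<open>n+1\<close> positions of the peak
  bounds the probability of an open path of length \<open>n\<close> by \<open>(n+1)((2d-1)/(2d))\<^sup>n\<^sup>-\<^sup>1\<close>,
  which tends to 0. By Koenig's lemma the percolation event is the intersection of these
  events, which also makes it measurable.\<close>

section \<open>Self-avoiding walks\<close>

definition saws :: "('a \<Rightarrow> 'a \<Rightarrow> bool) \<Rightarrow> 'a \<Rightarrow> nat \<Rightarrow> 'a list set" where
  "saws E x n = {w. length w = Suc n \<and> hd w = x \<and> distinct w \<and> successively E w}"

lemma saws_0: "saws E x 0 = {[x]}"
  by (auto simp: saws_def length_Suc_conv)

lemma saws_Suc_subset:
  "saws E x (Suc n) \<subseteq> (\<lambda>(w, y). w @ [y]) ` (SIGMA w:saws E x n. {y. E (last w) y} - set w)"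
proof
  fix v assume v: "v \<in> saws E x (Suc n)"
  then have "v \<noteq> []" by (auto simp: saws_def)
  then obtain w y where vw: "v = w @ [y]"
    using rev_exhaust by blast
  with v have "w \<noteq> []" by (auto simp: saws_def)
  with v vw have "w \<in> saws E x n" "y \<in> {y. E (last w) y} - set w"
    by (auto simp: saws_def successively_append_iff)
  with vw show "v \<in> (\<lambda>(w, y). w @ [y]) ` (SIGMA w:saws E x n. {y. E (last w) y} - set w)"
    by force
qed

lemma set_subset_if_successively:
  assumes "successively E w" and "w \<noteq> [] \<Longrightarrow> hd w \<in> S"
    and "\<And>x y. x \<in> S \<Longrightarrow> E x y \<Longrightarrow> y \<in> S"
  shows "set w \<subseteq> S"
  using assms(1,2)
proof (induction w)
  case (Cons x w)
  then have "x \<in> S" and walk: "w \<noteq> [] \<Longrightarrow> E x (hd w)" "successively E w"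
    by (auto simp: successively_Cons)
  with assms(3) have "w \<noteq> [] \<Longrightarrow> hd w \<in> S" by blast
  with Cons.IH walk(2) \<open>x \<in> S\<close> show ?case by simp
qed simp

lemma koenig_infinite_branch:
  fixes P :: "'a list \<Rightarrow> bool"
  assumes prefix_closed: "\<And>xs ys. P (xs @ ys) \<Longrightarrow> P xs"
    and finitely_branching: "\<And>xs. finite {y. P (xs @ [y])}"
    and unbounded: "\<And>n. \<exists>xs. length xs = n \<and> P xs"
  shows "\<exists>f. \<forall>n. P (map f [0..<n])"
proof -
  define extensible where "extensible xs \<longleftrightarrow> (\<forall>n. \<exists>ys. length ys = n \<and> P (xs @ ys))" for xs
  have extend: "\<exists>y. extensible (xs @ [y])" if ext: "extensible xs" for xs
  proof (rule ccontr)
    assume "\<nexists>y. extensible (xs @ [y])"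
    then obtain bound where bound: "\<And>y. \<nexists>ys. length ys = bound y \<and> P (xs @ [y] @ ys)"
      unfolding extensible_def by (metis append.assoc)
    define N where "N = Max (bound ` {y. P (xs @ [y])})"
    obtain ys where ys: "length ys = Suc N" "P (xs @ ys)"
      using ext unfolding extensible_def by blast
    then obtain y zs where yzs: "ys = y # zs" by (cases ys) auto
    with ys have "P (xs @ [y])" using prefix_closed[of "xs @ [y]"] by simp
    then have "bound y \<le> N" unfolding N_def using finitely_branching by simp
    moreover have "P (xs @ [y] @ take (bound y) zs)"
      using ys yzs prefix_closed[of "xs @ [y] @ take (bound y) zs" "drop (bound y) zs"] by simp
    ultimately show False using bound[of y] ys yzs by simp
  qed
  have "\<exists>W. \<forall>n. (extensible (W n) \<and> length (W n) = n) \<and> (\<exists>y. W (Suc n) = W n @ [y])"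
  proof (rule dependent_nat_choice)
    show "\<exists>xs. extensible xs \<and> length xs = 0"
      using unbounded unfolding extensible_def by auto
  qed (use extend in force)
  then obtain W where W: "\<And>n. extensible (W n)" "\<And>n. length (W n) = n"
    and W_Suc: "\<And>n. \<exists>y. W (Suc n) = W n @ [y]" by blast
  have "W n = map (\<lambda>i. last (W (Suc i))) [0..<n]" for n
  proof (induction n)
    case 0
    show ?case using W(2)[of 0] by simp
  next
    case (Suc n)
    show ?case using W_Suc[of n] Suc by auto
  qed
  moreover have "P (W n)" for n
    using W(1)[of n] unfolding extensible_def by fastforce
  ultimately show ?thesis by metis
qed

context
  fixes E :: "'a \<Rightarrow> 'a \<Rightarrow> bool"
  assumes finite_succ: "\<And>x. finite {y. E x y}"
begin

lemma finite_saws: "finite (saws E x n)"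
proof (induction n)
  case (Suc n)
  show ?case
    by (rule finite_subset[OF saws_Suc_subset]) (auto intro: Suc finite_succ)
qed (simp add: saws_0)

lemma card_saws_Suc_le:
  "card (saws E x (Suc n)) \<le> (\<Sum>w\<in>saws E x n. card ({y. E (last w) y} - set w))"
proof -
  have fin: "finite (SIGMA w:saws E x n. {y. E (last w) y} - set w)"
    by (auto intro: finite_saws finite_succ)
  have "card (saws E x (Suc n))
      \<le> card ((\<lambda>(w, y). w @ [y]) ` (SIGMA w:saws E x n. {y. E (last w) y} - set w))"
    using fin by (intro card_mono saws_Suc_subset) auto
  also have "\<dots> \<le> card (SIGMA w:saws E x n. {y. E (last w) y} - set w)"
    using fin by (rule card_image_le)
  also have "\<dots> = (\<Sum>w\<in>saws E x n. card ({y. E (last w) y} - set w))"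
    by (rule card_SigmaI) (auto intro: finite_saws finite_succ)
  finally show ?thesis .
qed

lemma card_saws_le:
  assumes sym: "\<And>x y. E x y \<Longrightarrow> E y x" and deg: "\<And>x. card {y. E x y} \<le> D"
  shows "card (saws E x (Suc n)) \<le> D * (D - 1) ^ n"
proof (induction n)
  case 0
  have "card (saws E x 1) \<le> card ({y. E x y} - {x})"
    using card_saws_Suc_le[of x 0] by (simp add: saws_0)
  also have "\<dots> \<le> D"
    using deg[of x] finite_succ[of x] by (meson card_Diff1_le order_trans)
  finally show ?case by simp
next
  case (Suc n)
  have "card ({y. E (last w) y} - set w) \<le> D - 1" if w: "w \<in> saws E x (Suc n)" for w
  proof -
    have len: "length w = Suc (Suc n)" and walk: "successively E w"
      using w by (auto simp: saws_def)
    have "last w = w ! Suc n" using len by (subst last_conv_nth) auto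
    then have to_pred: "E (last w) (w ! n)"
      using successively_nth[OF walk, of n] len sym by simp
    have "card ({y. E (last w) y} - set w) \<le> card ({y. E (last w) y} - {w ! n})"
      using len by (intro card_mono) (auto intro: finite_succ)
    also have "\<dots> = card {y. E (last w) y} - 1"
      using to_pred by (intro card_Diff_singleton finite_succ) simp
    also have "\<dots> \<le> D - 1"
      using deg by (rule diff_le_mono)
    finally show ?thesis .
  qed
  then have "(\<Sum>w\<in>saws E x (Suc n). card ({y. E (last w) y} - set w))
      \<le> (\<Sum>w\<in>saws E x (Suc n). D - 1)"
    by (rule sum_mono)
  with card_saws_Suc_le[of x "Suc n"]
  have "card (saws E x (Suc (Suc n))) \<le> card (saws E x (Suc n)) * (D - 1)"
    by simp
  also have "\<dots> \<le> D * (D - 1) ^ n * (D - 1)"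
    using Suc by (rule mult_right_mono) simp
  finally show ?case by (simp only: power_Suc2 mult.assoc)
qed

lemma infinite_saw_iff_saws_nonempty:
  "(\<exists>p. p 0 = x \<and> inj p \<and> (\<forall>n. E (p n) (p (Suc n)))) \<longleftrightarrow> (\<forall>n. saws E x n \<noteq> {})"
proof
  assume "\<exists>p. p 0 = x \<and> inj p \<and> (\<forall>n. E (p n) (p (Suc n)))"
  then obtain p where p: "p 0 = x" "inj p" "\<And>n. E (p n) (p (Suc n))" by blast
  have "map p [0..<Suc n] \<in> saws E x n" for n
    using p inj_on_subset[OF p(2)]
    by (auto simp: saws_def distinct_map successively_conv_nth hd_map simp del: upt_Suc)
  then show "\<forall>n. saws E x n \<noteq> {}" by blast
next
  assume nonempty: "\<forall>n. saws E x n \<noteq> {}"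
  define P where "P xs \<longleftrightarrow> distinct (x # xs) \<and> successively E (x # xs)" for xs
  have "\<exists>f. \<forall>n. P (map f [0..<n])"
  proof (rule koenig_infinite_branch)
    show "P xs" if "P (xs @ ys)" for xs ys
      using that unfolding P_def by (simp add: successively_append_iff flip: append_Cons)
    show "finite {y. P (xs @ [y])}" for xs
      by (rule finite_subset[OF _ finite_succ[of "last (x # xs)"]])
         (auto simp: P_def successively_append_iff simp flip: append_Cons)
    show "\<exists>xs. length xs = n \<and> P xs" for n
    proof -
      obtain w where w: "w \<in> saws E x n" using nonempty by blast
      then obtain ws where "w = x # ws" by (cases w) (auto simp: saws_def)
      with w show ?thesis by (auto simp: saws_def P_def)
    qed
  qed
  then obtain f where f: "\<And>n. P (map f [0..<n])" by blast
  define p where "p = case_nat x f"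
  have path: "distinct (map p [0..<Suc n]) \<and> successively E (map p [0..<Suc n])" for n
    using f[of n] unfolding P_def p_def by (simp add: map_upt_Suc del: upt_Suc)
  have "inj p"
  proof (rule injI)
    fix a b assume "p a = p b"
    moreover have "inj_on p {0..<Suc (max a b)}"
      using path[of "max a b"] by (simp add: distinct_map del: upt_Suc)
    ultimately show "a = b" by (auto dest: inj_onD)
  qed
  moreover have "E (p n) (p (Suc n))" for n
    using successively_nth[of E "map p [0..<Suc (Suc n)]" n] path[of "Suc n"] by (simp del: upt_Suc)
  moreover have "p 0 = x" by (simp add: p_def)
  ultimately show "\<exists>p. p 0 = x \<and> inj p \<and> (\<forall>n. E (p n) (p (Suc n)))"
    by blast
qed

end

section \<open>Paths in functional graphs\<close>

definition step_towards :: "nat \<Rightarrow> nat \<Rightarrow> nat" where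
  "step_towards j i = (if i < j then Suc i else i - 1)"

lemma path_in_functional_graph_has_peak:
  assumes "w \<noteq> []" and "distinct w" and edges: "successively (\<lambda>a b. c a = b \<or> c b = a) w"
  shows "\<exists>j<length w. \<forall>i\<in>{..<length w} - {j}. c (w ! i) = w ! step_towards j i"
proof -
  define fwd where "fwd i \<longleftrightarrow> c (w ! i) = w ! Suc i" for i
  define bwd where "bwd i \<longleftrightarrow> c (w ! Suc i) = w ! i" for i
  have edge: "fwd i \<or> bwd i" if "Suc i < length w" for i
    using successively_nth[OF edges that] unfolding fwd_def bwd_def by blast
  have bwd_Suc: "bwd (Suc i)" if "bwd i" "Suc (Suc i) < length w" for i
  proof -
    have "w ! Suc (Suc i) \<noteq> w ! i"
      using \<open>distinct w\<close> that(2) by (simp add: nth_eq_iff_index_eq)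
    then show ?thesis using edge[OF that(2)] that(1) unfolding fwd_def bwd_def by simp
  qed
  have bwd_from: "bwd i" if "bwd j" "j \<le> i" "Suc i < length w" for i j
    using that(2,3)
  proof (induction i rule: dec_induct)
    case (step i)
    then show ?case using bwd_Suc by simp
  qed (use that(1) in simp)
  define j where "j = (LEAST j. Suc j = length w \<or> bwd j)"
  have last: "Suc (length w - 1) = length w \<or> bwd (length w - 1)"
    using \<open>w \<noteq> []\<close> by simp
  have j_peak: "Suc j = length w \<or> bwd j"
    unfolding j_def using last by (rule LeastI)
  have "j \<le> length w - 1"
    unfolding j_def using last by (rule Least_le)
  then have "j < length w" using \<open>w \<noteq> []\<close> by (cases w) auto
  moreover have "c (w ! i) = w ! step_towards j i" if i: "i \<in> {..<length w} - {j}" for i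
  proof (cases "i < j")
    case True
    then have "\<not> (Suc i = length w \<or> bwd i)" unfolding j_def by (rule not_less_Least)
    with True \<open>j < length w\<close> show ?thesis
      using edge[of i] unfolding fwd_def step_towards_def by auto
  next
    case False
    with i have "j < i" "i < length w" by auto
    with j_peak have "bwd j" by auto
    then have "bwd (i - 1)" by (rule bwd_from) (use \<open>j < i\<close> \<open>i < length w\<close> in auto)
    with \<open>j < i\<close> show ?thesis unfolding bwd_def step_towards_def by simp
  qed
  ultimately show ?thesis by blast
qed

section \<open>The lattice\<close>

type_synonym vertex = "nat \<Rightarrow> int"
type_synonym configuration = "vertex \<Rightarrow> vertex set"

abbreviation lattice_adj :: "nat \<Rightarrow> vertex \<Rightarrow> vertex \<Rightarrow> bool" where
  "lattice_adj d x y \<equiv> y \<in> nbrs d x"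

lemma nbrs_eq_image: "nbrs d x = (\<lambda>(i, s). x(i := x i + s)) ` ({..<d} \<times> {1, -1})"
proof -
  have "(\<lambda>j. if j = i then x j + s else x j) = x(i := x i + s)" for i s
    by (simp add: fun_eq_iff)
  then show ?thesis unfolding nbrs_def by (auto simp: image_def)
qed

lemma inj_on_nbrs_param:
  fixes x :: vertex
  shows "inj_on (\<lambda>(i, s). x(i := x i + s)) ({..<d} \<times> {1, -1})"
proof (rule inj_onI, clarify)
  fix i s i' s' assume s: "s \<in> {1, -1}" "s' \<in> {1, -1}"
    and eq: "x(i := x i + s) = x(i' := x i' + s')"
  from fun_cong[OF eq, of i] fun_cong[OF eq, of i'] s show "i = i' \<and> s = s'"
    by (cases "i = i'") auto
qed

lemma finite_nbrs: "finite (nbrs d x)"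
  unfolding nbrs_eq_image by simp

lemma card_nbrs: "card (nbrs d x) = 2 * d"
  unfolding nbrs_eq_image by (simp add: card_image[OF inj_on_nbrs_param] card_cartesian_product)

lemma nbrs_sym:
  assumes "y \<in> nbrs d x"
  shows "x \<in> nbrs d y"
proof -
  obtain i s where "i < d" "s \<in> {1, -1}" "y = x(i := x i + s)"
    using assms unfolding nbrs_eq_image by auto
  then have "x = y(i := y i + - s)" "(i, - s) \<in> {..<d} \<times> {1, -1}" by auto
  then show ?thesis unfolding nbrs_eq_image by (auto intro: image_eqI[of _ _ "(i, - s)"])
qed

lemma nbrs_subset_zd: "x \<in> zd d \<Longrightarrow> nbrs d x \<subseteq> zd d"
  unfolding nbrs_def zd_def by auto

lemma origin_in_zd: "origin \<in> zd d"
  unfolding origin_def zd_def by simp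

lemma countable_zd: "countable (zd d)"
proof -
  have "zd d \<subseteq> range (\<lambda>l :: int list. \<lambda>i. if i < length l then l ! i else 0)"
  proof
    fix x assume "x \<in> zd d"
    then have "x = (\<lambda>i. if i < length (map x [0..<d]) then map x [0..<d] ! i else 0)"
      unfolding zd_def by (auto simp: fun_eq_iff)
    then show "x \<in> range (\<lambda>l :: int list. \<lambda>i. if i < length l then l ! i else 0)" by blast
  qed
  then show ?thesis by (rule countable_subset) simp
qed

lemma saws_lattice_subset_zd:
  assumes "w \<in> saws (lattice_adj d) origin n"
  shows "set w \<subseteq> zd d"
proof (rule set_subset_if_successively)
  show "successively (lattice_adj d) w" "hd w \<in> zd d"
    using assms origin_in_zd by (auto simp: saws_def)
qed (use nbrs_subset_zd in blast)

lemma card_saws_lattice_le: "card (saws (lattice_adj d) origin (Suc n)) \<le> 2 * d * (2 * d - 1) ^ n"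
  by (rule card_saws_le) (simp add: finite_nbrs, erule nbrs_sym, simp add: card_nbrs)

lemma ung_edge_imp_adj: "ung_edge d \<omega> x y \<Longrightarrow> lattice_adj d x y"
  unfolding ung_edge_def by blast

lemma saws_ung_edge:
  "saws (ung_edge d \<omega>) x n = {w \<in> saws (lattice_adj d) x n. successively (ung_edge d \<omega>) w}"
proof -
  have "successively (lattice_adj d) w" if "successively (ung_edge d \<omega>) w" for w
    using that by (rule successively_mono) (rule ung_edge_imp_adj)
  then show ?thesis unfolding saws_def by auto
qed

section \<open>Measurability of the percolation event\<close>

lemma prob_space_kUnG: "prob_space (kUnG d k)"
  unfolding kUnG_def by (intro prob_space_PiM prob_space_measure_pmf)

lemma sets_kUnG_component:
  assumes "x \<in> zd d"
  shows "{\<omega> \<in> space (kUnG d k). P (\<omega> x)} \<in> sets (kUnG d k)"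
proof -
  have "(\<lambda>\<omega>. \<omega> x) \<in> measurable (kUnG d k) (measure_pmf (choice_pmf d k x))"
    unfolding kUnG_def using assms by (rule measurable_component_singleton)
  then have "(\<lambda>\<omega>. \<omega> x) -` {S. P S} \<inter> space (kUnG d k) \<in> sets (kUnG d k)"
    by (rule measurable_sets) simp
  then show ?thesis by (simp add: Int_def conj_commute)
qed

lemma sets_kUnG_ung_edge:
  assumes "x \<in> zd d" "y \<in> zd d"
  shows "{\<omega> \<in> space (kUnG d k). ung_edge d \<omega> x y} \<in> sets (kUnG d k)"
proof -
  have "{\<omega> \<in> space (kUnG d k). ung_edge d \<omega> x y} =
    (if y \<in> nbrs d x
     then {\<omega> \<in> space (kUnG d k). y \<in> \<omega> x} \<union> {\<omega> \<in> space (kUnG d k). x \<in> \<omega> y}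
     else {})"
    by (auto simp: ung_edge_def)
  then show ?thesis using sets_kUnG_component[OF assms(1)] sets_kUnG_component[OF assms(2)] by auto
qed

definition open_saw_event :: "nat \<Rightarrow> nat \<Rightarrow> nat \<Rightarrow> configuration set" where
  "open_saw_event d k n = {\<omega> \<in> space (kUnG d k). saws (ung_edge d \<omega>) origin n \<noteq> {}}"

lemma sets_open_saw_event: "open_saw_event d k n \<in> sets (kUnG d k)"
proof -
  have "saws (ung_edge d \<omega>) origin n \<noteq> {} \<longleftrightarrow>
    (\<exists>w\<in>saws (lattice_adj d) origin n. \<forall>i\<in>{..<n}. ung_edge d \<omega> (w ! i) (w ! Suc i))" for \<omega>
    unfolding saws_ung_edge by (auto simp: saws_def successively_conv_nth)
  then have "open_saw_event d k n = {\<omega> \<in> space (kUnG d k). \<exists>w\<in>saws (lattice_adj d) origin n.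
          \<forall>i\<in>{..<n}. ung_edge d \<omega> (w ! i) (w ! Suc i)}"
    unfolding open_saw_event_def by simp
  also have "\<dots> \<in> sets (kUnG d k)"
  proof (rule sets.sets_Collect_finite_Ex)
    show "finite (saws (lattice_adj d) origin n)"
      by (rule finite_saws) (simp add: finite_nbrs)
    fix w assume w: "w \<in> saws (lattice_adj d) origin n"
    show "{\<omega> \<in> space (kUnG d k). \<forall>i\<in>{..<n}. ung_edge d \<omega> (w ! i) (w ! Suc i)} \<in> sets (kUnG d k)"
    proof (rule sets.sets_Collect_finite_All)
      fix i assume "i \<in> {..<n}"
      with w have "w ! i \<in> set w" "w ! Suc i \<in> set w" by (auto simp: saws_def)
      with saws_lattice_subset_zd[OF w]
      show "{\<omega> \<in> space (kUnG d k). ung_edge d \<omega> (w ! i) (w ! Suc i)} \<in> sets (kUnG d k)"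
        by (intro sets_kUnG_ung_edge) auto
    qed simp
  qed
  finally show ?thesis .
qed

lemma perc_event_eq_INT_open_saw_event: "perc_event d k = (\<Inter>n. open_saw_event d k n)"
proof -
  have "(\<exists>p. p 0 = origin \<and> inj p \<and> (\<forall>n. p n \<in> zd d \<and> ung_edge d \<omega> (p n) (p (Suc n))))
    \<longleftrightarrow> (\<exists>p. p 0 = origin \<and> inj p \<and> (\<forall>n. ung_edge d \<omega> (p n) (p (Suc n))))" for \<omega>
  proof -
    have "p n \<in> zd d" if "p 0 = origin" "\<forall>n. ung_edge d \<omega> (p n) (p (Suc n))" for p n
      using that by (induction n) (auto simp: origin_in_zd dest: ung_edge_imp_adj nbrs_subset_zd)
    then show ?thesis by blast
  qed
  also have "\<dots> \<omega> \<longleftrightarrow> (\<forall>n. saws (ung_edge d \<omega>) origin n \<noteq> {})" for \<omega>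
    by (rule infinite_saw_iff_saws_nonempty)
       (rule finite_subset[OF _ finite_nbrs], auto dest: ung_edge_imp_adj)
  finally have "\<omega> \<in> perc_event d k \<longleftrightarrow> \<omega> \<in> (\<Inter>n. open_saw_event d k n)" for \<omega>
    unfolding perc_event_def open_saw_event_def by simp
  then show ?thesis by blast
qed

lemma sets_perc_event: "perc_event d k \<in> sets (kUnG d k)"
  unfolding perc_event_eq_INT_open_saw_event
  by (rule sets.countable_INT') (auto intro: sets_open_saw_event)

section \<open>The 1-neighbour graph\<close>

lemma subsets_card_1_eq_image: "{S. S \<subseteq> A \<and> card S = 1} = (\<lambda>y. {y}) ` A"
  by (auto simp: card_1_singleton_iff)

lemma
  assumes "d \<ge> 1"
  shows set_pmf_choice_pmf_1: "set_pmf (choice_pmf d 1 x) = (\<lambda>y. {y}) ` nbrs d x"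
    and pmf_choice_pmf_1: "y \<in> nbrs d x \<Longrightarrow> pmf (choice_pmf d 1 x) {y} = 1 / (2 * real d)"
proof -
  have card: "card ((\<lambda>y. {y}) ` nbrs d x) = 2 * d"
    by (simp add: card_image card_nbrs)
  with assms have nonempty: "(\<lambda>y. {y}) ` nbrs d x \<noteq> {}" by auto
  have finite: "finite ((\<lambda>y. {y}) ` nbrs d x)" by (simp add: finite_nbrs)
  show "set_pmf (choice_pmf d 1 x) = (\<lambda>y. {y}) ` nbrs d x"
    unfolding choice_pmf_def subsets_card_1_eq_image using nonempty finite by simp
  show "pmf (choice_pmf d 1 x) {y} = 1 / (2 * real d)" if "y \<in> nbrs d x"
    unfolding choice_pmf_def subsets_card_1_eq_image using nonempty finite card that by simp
qed

lemma AE_kUnG_1_singleton: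
  assumes "d \<ge> 1"
  shows "AE \<omega> in kUnG d 1. \<forall>x\<in>zd d. \<exists>y. \<omega> x = {y}"
proof (subst AE_ball_countable[OF countable_zd], intro ballI)
  fix x assume x: "x \<in> zd d"
  have "AE S in measure_pmf (choice_pmf d 1 x). \<exists>y. S = {y}"
  proof (rule AE_pmfI)
    fix S assume "S \<in> set_pmf (choice_pmf d 1 x)"
    then show "\<exists>y. S = {y}" unfolding set_pmf_choice_pmf_1[OF assms] by blast
  qed
  then show "AE \<omega> in kUnG d 1. \<exists>y. \<omega> x = {y}"
    unfolding kUnG_def by (rule AE_PiM_component[OF prob_space_measure_pmf x])
qed

lemma
  assumes "d \<ge> 1" and "finite K" and "inj_on f K" and "f ` K \<subseteq> zd d"
    and g: "\<And>i. i \<in> K \<Longrightarrow> g i \<in> nbrs d (f i)"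
  shows sets_kUnG_1_cylinder:
      "{\<omega> \<in> space (kUnG d 1). \<forall>i\<in>K. \<omega> (f i) = {g i}} \<in> sets (kUnG d 1)"
    and measure_kUnG_1_cylinder:
      "measure (kUnG d 1) {\<omega> \<in> space (kUnG d 1). \<forall>i\<in>K. \<omega> (f i) = {g i}}
         = (1 / (2 * real d)) ^ card K"
proof -
  define J where "J = f ` K"
  define t where "t x = g (the_inv_into K f x)" for x
  have t_f: "t (f i) = g i" if "i \<in> K" for i
    unfolding t_def using that \<open>inj_on f K\<close> by (simp add: the_inv_into_f_f)
  let ?M = "\<lambda>x. measure_pmf (choice_pmf d 1 x)"
  have eq: "{\<omega> \<in> space (kUnG d 1). \<forall>i\<in>K. \<omega> (f i) = {g i}}
      = prod_emb (zd d) ?M J (\<Pi>\<^sub>E x\<in>J. {{t x}})"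
    unfolding J_def by (auto simp: prod_emb_def kUnG_def space_PiM PiE_iff t_f extensional_def)
  have J: "J \<subseteq> zd d" "finite J" using assms unfolding J_def by auto
  show "{\<omega> \<in> space (kUnG d 1). \<forall>i\<in>K. \<omega> (f i) = {g i}} \<in> sets (kUnG d 1)"
    unfolding eq unfolding kUnG_def by (rule sets_PiM_I) (use J in auto)
  have "emeasure (kUnG d 1) {\<omega> \<in> space (kUnG d 1). \<forall>i\<in>K. \<omega> (f i) = {g i}}
      = (\<Prod>x\<in>J. emeasure (?M x) {{t x}})"
    unfolding eq unfolding kUnG_def by (rule emeasure_PiM_emb) (use J prob_space_measure_pmf in auto)
  also have "\<dots> = (\<Prod>x\<in>J. ennreal (1 / (2 * real d)))"
  proof (rule prod.cong)
    fix x assume "x \<in> J"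
    then have "t x \<in> nbrs d x" using g t_f unfolding J_def by auto
    then have "pmf (choice_pmf d 1 x) {t x} = 1 / (2 * real d)"
      by (rule pmf_choice_pmf_1[OF \<open>d \<ge> 1\<close>])
    then show "emeasure (?M x) {{t x}} = ennreal (1 / (2 * real d))"
      by (simp only: emeasure_pmf_single)
  qed simp
  also have "\<dots> = ennreal ((1 / (2 * real d)) ^ card K)"
    using \<open>inj_on f K\<close> unfolding J_def by (simp add: card_image ennreal_power)
  finally show "measure (kUnG d 1) {\<omega> \<in> space (kUnG d 1). \<forall>i\<in>K. \<omega> (f i) = {g i}}
      = (1 / (2 * real d)) ^ card K"
    by (simp add: measure_def)
qed

definition peak_event :: "nat \<Rightarrow> vertex list \<Rightarrow> nat \<Rightarrow> configuration set" where
  "peak_event d w j =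
     {\<omega> \<in> space (kUnG d 1). \<forall>i\<in>{..<length w} - {j}. \<omega> (w ! i) = {w ! step_towards j i}}"

lemma
  assumes "d \<ge> 1" and w: "w \<in> saws (lattice_adj d) origin n" and "j \<le> n"
  shows sets_peak_event: "peak_event d w j \<in> sets (kUnG d 1)"
    and measure_peak_event: "measure (kUnG d 1) (peak_event d w j) = (1 / (2 * real d)) ^ n"
proof -
  have len: "length w = Suc n" and "distinct w" and walk: "successively (lattice_adj d) w"
    using w by (auto simp: saws_def)
  have inj: "inj_on ((!) w) ({..<length w} - {j})"
    using \<open>distinct w\<close> by (auto simp: inj_on_def nth_eq_iff_index_eq)
  have zd: "(!) w ` ({..<length w} - {j}) \<subseteq> zd d"
    using saws_lattice_subset_zd[OF w] nth_mem by blast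
  have step: "w ! step_towards j i \<in> nbrs d (w ! i)" if "i \<in> {..<length w} - {j}" for i
  proof (cases "i < j")
    case True
    with that \<open>j \<le> n\<close> len show ?thesis
      using successively_nth[OF walk, of i] unfolding step_towards_def by simp
  next
    case False
    with that have "j < i" "i < length w" by auto
    then have "w ! i \<in> nbrs d (w ! (i - 1))"
      using successively_nth[OF walk, of "i - 1"] by simp
    with \<open>j < i\<close> show ?thesis unfolding step_towards_def by (simp add: nbrs_sym)
  qed
  have "card ({..<length w} - {j}) = n" using len \<open>j \<le> n\<close> by simp
  with sets_kUnG_1_cylinder[OF \<open>d \<ge> 1\<close> _ inj zd step]
    measure_kUnG_1_cylinder[OF \<open>d \<ge> 1\<close> _ inj zd step]
  show "peak_event d w j \<in> sets (kUnG d 1)"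
    and "measure (kUnG d 1) (peak_event d w j) = (1 / (2 * real d)) ^ n"
    unfolding peak_event_def by simp_all
qed

lemma AE_open_saw_event_imp_peak_event:
  assumes "d \<ge> 1"
  shows "AE \<omega> in kUnG d 1. \<omega> \<in> open_saw_event d 1 n \<longrightarrow>
           (\<exists>w\<in>saws (lattice_adj d) origin n. \<exists>j\<le>n. \<omega> \<in> peak_event d w j)"
  using AE_kUnG_1_singleton[OF assms]
proof (rule AE_mp, intro AE_I2 impI)
  fix \<omega> assume singleton: "\<forall>x\<in>zd d. \<exists>y. \<omega> x = {y}" and "\<omega> \<in> open_saw_event d 1 n"
  then obtain w where space: "\<omega> \<in> space (kUnG d 1)" and w: "w \<in> saws (ung_edge d \<omega>) origin n"
    unfolding open_saw_event_def by blast
  then have w_lattice: "w \<in> saws (lattice_adj d) origin n" and edges: "successively (ung_edge d \<omega>) w"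
    unfolding saws_ung_edge by auto
  define c where "c x = the_elem (\<omega> x)" for x
  have \<omega>_c: "\<omega> x = {c x}" if "x \<in> set w" for x
    using singleton saws_lattice_subset_zd[OF w_lattice] that unfolding c_def by fastforce
  have "w \<noteq> []" "distinct w" using w_lattice by (auto simp: saws_def)
  moreover have "successively (\<lambda>a b. c a = b \<or> c b = a) w"
  proof (rule successively_mono[OF edges])
    fix a b assume "a \<in> set w" "b \<in> set w" "ung_edge d \<omega> a b"
    then show "c a = b \<or> c b = a" using \<omega>_c unfolding ung_edge_def by auto
  qed
  ultimately obtain j where "j < length w"
    and peak: "\<forall>i\<in>{..<length w} - {j}. c (w ! i) = w ! step_towards j i"
    using path_in_functional_graph_has_peak by blast
  have "\<omega> \<in> peak_event d w j"
    unfolding peak_event_def using space peak \<omega>_c by auto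
  moreover have "j \<le> n" using \<open>j < length w\<close> w_lattice by (simp add: saws_def)
  ultimately show "\<exists>w\<in>saws (lattice_adj d) origin n. \<exists>j\<le>n. \<omega> \<in> peak_event d w j"
    using w_lattice by blast
qed

lemma theta_U_1_le:
  assumes "d \<ge> 1"
  shows "theta_U 1 d
    \<le> real (Suc n) * real (card (saws (lattice_adj d) origin n)) * (1 / (2 * real d)) ^ n"
proof -
  interpret prob_space "kUnG d 1" by (rule prob_space_kUnG)
  define I where "I = saws (lattice_adj d) origin n \<times> {..n}"
  have finite_I: "finite I"
    unfolding I_def by (simp add: finite_saws finite_nbrs)
  have sets_peak: "(\<lambda>(w, j). peak_event d w j) ` I \<subseteq> sets (kUnG d 1)"
    using sets_peak_event[OF assms] unfolding I_def by auto
  have "theta_U 1 d \<le> prob (open_saw_event d 1 n)"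
    unfolding theta_U_def perc_event_eq_INT_open_saw_event
    by (rule finite_measure_mono) (auto intro: sets_open_saw_event)
  also have "\<dots> \<le> prob (\<Union>(w, j)\<in>I. peak_event d w j)"
  proof (rule finite_measure_mono_AE)
    show "AE \<omega> in kUnG d 1.
        \<omega> \<in> open_saw_event d 1 n \<longrightarrow> \<omega> \<in> (\<Union>(w, j)\<in>I. peak_event d w j)"
      using AE_open_saw_event_imp_peak_event[OF assms] unfolding I_def by (rule AE_mp) auto
  qed (use finite_I sets_peak in auto)
  also have "\<dots> \<le> (\<Sum>(w, j)\<in>I. prob (peak_event d w j))"
    using finite_measure_subadditive_finite[OF finite_I sets_peak] by (simp add: case_prod_unfold)
  also have "\<dots> = (\<Sum>(w, j)\<in>I. (1 / (2 * real d)) ^ n)"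
  proof (rule sum.cong[OF refl], clarify)
    fix w j assume "(w, j) \<in> I"
    then show "prob (peak_event d w j) = (1 / (2 * real d)) ^ n"
      unfolding I_def by (intro measure_peak_event[OF assms]) auto
  qed
  also have "\<dots>
      = real (Suc n) * real (card (saws (lattice_adj d) origin n)) * (1 / (2 * real d)) ^ n"
    unfolding I_def by (simp add: card_cartesian_product algebra_simps)
  finally show ?thesis .
qed

lemma theta_U_1_le_geometric:
  assumes "d \<ge> 1"
  shows "theta_U 1 d \<le> real (m + 2) * ((2 * real d - 1) / (2 * real d)) ^ m"
proof -
  have "real (card (saws (lattice_adj d) origin (Suc m))) \<le> real (2 * d * (2 * d - 1) ^ m)"
    using card_saws_lattice_le by (rule of_nat_mono)
  also have "\<dots> = 2 * real d * (2 * real d - 1) ^ m"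
    using assms by (simp add: of_nat_diff)
  finally have card_le: "real (card (saws (lattice_adj d) origin (Suc m))) \<le> \<dots>" .
  have "theta_U 1 d \<le>
    real (Suc (Suc m)) * real (card (saws (lattice_adj d) origin (Suc m))) * (1 / (2 * real d)) ^ Suc m"
    by (rule theta_U_1_le[OF assms])
  also have "\<dots>
      \<le> real (Suc (Suc m)) * (2 * real d * (2 * real d - 1) ^ m) * (1 / (2 * real d)) ^ Suc m"
    using card_le by (intro mult_right_mono mult_left_mono) auto
  also have "\<dots> = real (m + 2) * ((2 * real d - 1) / (2 * real d)) ^ m"
    using assms by (simp add: power_divide field_simps)
  finally show ?thesis .
qed

lemma linear_times_power_tendsto_zero:
  fixes r :: real
  assumes "0 \<le> r" "r < 1"
  shows "(\<lambda>m. real (m + 2) * r ^ m) \<longlonglongrightarrow> 0"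
proof -
  have "(\<lambda>m. real m * r ^ m + 2 * r ^ m) \<longlonglongrightarrow> 0 + 2 * 0"
    using assms by (intro tendsto_add tendsto_mult_left LIMSEQ_power_zero powser_times_n_limit_0) auto
  then show ?thesis by (simp add: algebra_simps)
qed

theorem proposition2p8:
  fixes d :: nat
  assumes "d \<ge> 1"
  shows "perc_event d 1 \<in> sets (kUnG d 1) \<and> theta_U 1 d = 0"
proof
  show "perc_event d 1 \<in> sets (kUnG d 1)" by (rule sets_perc_event)
  have "(2 * real d - 1) / (2 * real d) < 1" "0 \<le> (2 * real d - 1) / (2 * real d)"
    using assms by auto
  from linear_times_power_tendsto_zero[OF this(2,1)]
  have "theta_U 1 d \<le> 0"
    by (rule LIMSEQ_le_const) (use theta_U_1_le_geometric[OF assms] in auto)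
  moreover have "theta_U 1 d \<ge> 0" unfolding theta_U_def by simp
  ultimately show "theta_U 1 d = 0" by simp
qed

end
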